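(* Let $\kappa$ be an infinite cardinal and $B$ a partially ordered structure. If the ordinal $\kappa^++1$ (with its natural order) or its reverse order $(\kappa^++1)^*$ is order-isomorphically embeddable into $B$, then $B$ does not have the $\kappa$-FN. In particular, every Boolean algebra $B$ with the $\kappa$-FN satisfies $\mathrm{Depth}(B)\le\kappa$.
   Context: A partially ordered structure is a structure (in some fixed signature) together with a distinguished partial order $\le$ on its universe. For an infinite cardinal $\kappa$, $B$ has the $\kappa$-Freese–Nation property ($\kappa$-FN) if there is a map $f:B\to[B]^{<\kappa}$ such that for all $a,b\in B$ with $a\le b$ there is $c\in f(a)\cap f(b)$ with $a\le c\le b$. For a Boolean algebra $B$, $\mathrm{Depth}(B)$ is the supremum of the cardinalities of subsets of $B$ well-ordered by the Boolean order. *)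

theory Defs
  imports Main
begin

text \<open>Cardinals are represented, as in the BNF cardinal library of Main, by cardinal
order relations \<open>k :: 'k rel\<close> with \<open>Card_order k\<close>; the successor cardinal is
\<open>cardSuc k\<close>.  A partially ordered structure is a carrier \<open>A\<close> with a partial order
\<open>r\<close> on it (the rest of the signature is irrelevant).\<close>

definition FN :: "'k rel \<Rightarrow> 'a set \<Rightarrow> 'a rel \<Rightarrow> bool" where
  "FN k A r \<longleftrightarrow>
     (\<exists>f :: 'a \<Rightarrow> 'a set.
        (\<forall>a\<in>A. f a \<subseteq> A \<and> (card_of (f a), k) \<in> ordLess) \<and>
        (\<forall>a\<in>A. \<forall>b\<in>A. (a, b) \<in> r \<longrightarrow>
            (\<exists>c \<in> f a \<inter> f b. (a, c) \<in> r \<and> (c, b) \<in> r)))"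

definition plus_one :: "'k rel \<Rightarrow> 'k option rel" where
  "plus_one s = {(Some x, Some y) | x y. (x, y) \<in> s}
              \<union> {(Some x, None) | x. x \<in> Field s} \<union> {(None, None)}"

definition order_embeds :: "'b rel \<Rightarrow> 'a set \<Rightarrow> 'a rel \<Rightarrow> bool" where
  "order_embeds s A r \<longleftrightarrow>
     (\<exists>g. g ` Field s \<subseteq> A \<and> inj_on g (Field s) \<and>
          (\<forall>x\<in>Field s. \<forall>y\<in>Field s. (x, y) \<in> s \<longleftrightarrow> (g x, g y) \<in> r))"

definition bool_order :: "('b::boolean_algebra) rel" where
  "bool_order = {(x, y). x \<le> y}"

definition depth_le :: "'k rel \<Rightarrow> ('b::boolean_algebra) itself \<Rightarrow> bool" where
  "depth_le k _ \<longleftrightarrow>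
     (\<forall>W :: 'b set. Well_order (Restr bool_order W) \<longrightarrow> (card_of W, k) \<in> ordLeq)"

end

theory Submission
  imports Defs
begin

(* Let f witness the k-Freese-Nation property and let g embed a chain of order type k\<^sup>+.
   Call S \<subseteq> A a submodel if it is closed under f and, for every s \<in> S that does not bound the
   chain, contains a chain element not below s; submodels of size \<le> k exist around every set of
   size \<le> k, and the ordinals \<delta> such that the chain meets some submodel exactly below \<delta> form a
   closed unbounded subset of k\<^sup>+.  Choose a regular \<mu> \<le> k with |f (g \<alpha>)| < \<mu> on a cofinal
   part of the chain (\<mu> = k for regular k, otherwise the successor of a suitable smaller
   cardinal) and such a \<delta> of cofinality \<mu> in it.  Interpolating between g \<alpha> (\<alpha> < \<delta>) and g \<delta>
   and pigeonholing into f (g \<delta>) gives one c with g \<alpha> \<le> c < g \<delta> for all \<alpha> < \<delta>, and c lies in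
   the submodel, so c bounds the whole chain; then g \<delta> \<le> c, a contradiction. *)

unbundle cardinal_syntax

lemma finite_card_of_ordLess_infinite:
  assumes "Card_order k" "infinite (Field k)" "finite X"
  shows "|X| <o k"
  using finite_ordLess_infinite[OF card_of_Well_order card_order_on_well_order_on] assms
  by (simp add: Field_card_of)

lemma singleton_ordLeq_infinite: "Card_order k \<Longrightarrow> infinite (Field k) \<Longrightarrow> |{x}| \<le>o k"
  by (rule ordLess_imp_ordLeq[OF finite_card_of_ordLess_infinite]) simp_all

lemma card_of_nat_ordLeq_infinite: "Card_order k \<Longrightarrow> infinite (Field k) \<Longrightarrow> |UNIV :: nat set| \<le>o k"
  using infinite_iff_card_of_nat card_of_Field_ordIso ordLeq_ordIso_trans by blast

lemma card_of_ordLess_underS: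
  assumes "Card_order k" "|X| <o k"
  obtains a where "a \<in> Field k" "|X| \<le>o |underS k a|"
proof -
  obtain a where a: "a \<in> Field k" "|X| =o Restr k (underS k a)"
    using ordLess_iff_ordIso_Restr[OF card_order_on_well_order_on[OF assms(1)] card_of_Well_order]
      assms(2) by blast
  have "|X| =o |Field (Restr k (underS k a))|"
    using card_of_cong[OF a(2)] by (simp add: Field_card_of)
  also have "|Field (Restr k (underS k a))| \<le>o |underS k a|"
    by (rule card_of_mono1[OF Field_Restr_subset])
  finally show thesis
    using a(1) that by blast
qed

text \<open>The witness is \<open>(|underS k a| + \<aleph>\<^sub>0)\<^sup>+\<close>; it is \<open>\<le> k\<close> because a non-stable infinite
  \<open>k\<close> is uncountable.\<close>
lemma stable_cardSuc_below_singular: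
  fixes k :: "'k rel"
  assumes k: "Card_order k" "infinite (Field k)" "\<not> stable k" and a: "a \<in> Field k"
  obtains mu :: "('k + nat) set rel"
  where "Card_order mu" "stable mu" "infinite (Field mu)" "mu \<le>o k" "|underS k a| <o mu"
proof -
  have "\<not> |UNIV :: nat set| =o k"
    using k(3) stable_ordIso1[OF stable_natLeq] card_of_nat ordIso_symmetric ordIso_transitive
    by metis
  then have nat_k: "|UNIV :: nat set| <o k"
    using card_of_nat_ordLeq_infinite[OF k(1,2)] ordLeq_iff_ordLess_or_ordIso by blast
  define nu where "nu = |underS k a <+> (UNIV :: nat set)|"
  have nu: "Card_order nu" "infinite (Field nu)"
    unfolding nu_def by (simp_all add: card_of_card_order_on Field_card_of)
  have card: "Card_order (cardSuc nu)"
    by (rule cardSuc_Card_order[OF nu(1)])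
  have infinite: "infinite (Field (cardSuc nu))"
    using cardSuc_finite[OF nu(1)] nu(2) by simp
  have stable: "stable (cardSuc nu)"
    using regularCard_stable[OF card infinite infinite_cardSuc_regularCard[OF nu(2) nu(1)]] .
  have "nu <o k"
    unfolding nu_def
    by (rule card_of_Plus_ordLess_infinite_Field[OF k(2) k(1) card_of_underS[OF k(1) a] nat_k])
  then have below_k: "cardSuc nu \<le>o k"
    by (rule cardSuc_least[OF nu(1) k(1)])
  have "|underS k a| \<le>o nu"
    unfolding nu_def by (rule card_of_Plus1)
  then have above: "|underS k a| <o cardSuc nu"
    using cardSuc_greater[OF nu(1)] by (rule ordLeq_ordLess_trans)
  show thesis
    by (rule that[OF card stable infinite below_k above])
qed

lemma (in wo_rel) le_underS_trans: "(a, b) \<in> r \<Longrightarrow> b \<in> underS c \<Longrightarrow> a \<in> underS c"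
  using TRANS ANTISYM unfolding underS_def trans_def antisym_def by blast

lemma (in wo_rel) underS_le_trans: "a \<in> underS b \<Longrightarrow> (b, c) \<in> r \<Longrightarrow> a \<in> underS c"
  using TRANS ANTISYM unfolding underS_def trans_def antisym_def by blast

lemma (in wo_rel) underS_trans: "a \<in> underS b \<Longrightarrow> b \<in> underS c \<Longrightarrow> a \<in> underS c"
  using le_underS_trans unfolding underS_def by blast

lemma (in wo_rel) underS_not_le: "a \<in> underS b \<Longrightarrow> (b, a) \<notin> r"
  using ANTISYM unfolding underS_def antisym_def by blast

lemma (in wo_rel) underS_or_le: "a \<in> Field r \<Longrightarrow> b \<in> Field r \<Longrightarrow> a \<in> underS b \<or> (b, a) \<in> r"
  using TOTALS REFL unfolding underS_def refl_on_def by blast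

lemma (in wo_rel) least_heavy_point:
  assumes mu: "Card_order mu" "infinite (Field mu)"
    and heavy: "\<beta> \<in> Field r" "\<not> |E \<inter> underS \<beta>| <o mu"
  obtains \<delta> where "\<delta> \<in> Field r" "\<not> |E \<inter> underS \<delta>| <o mu"
    "\<And>\<alpha>. \<alpha> \<in> underS \<delta> \<Longrightarrow> |E \<inter> under \<alpha>| <o mu"
proof
  define H where "H = {\<beta>\<in>Field r. \<not> |E \<inter> underS \<beta>| <o mu}"
  have H: "H \<subseteq> Field r" "H \<noteq> {}"
    using heavy unfolding H_def by blast+
  have "minim H \<in> H"
    by (rule minim_in[OF H])
  then show "minim H \<in> Field r" "\<not> |E \<inter> underS (minim H)| <o mu"
    unfolding H_def by blast+
  fix \<alpha> assume \<alpha>: "\<alpha> \<in> underS (minim H)"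
  then have "\<alpha> \<notin> H"
    using minim_least[OF H(1)] underS_not_le by blast
  moreover have "\<alpha> \<in> Field r"
    using \<alpha> underS_Field by fast
  ultimately have "|E \<inter> underS \<alpha>| <o mu"
    unfolding H_def by blast
  then have "|(E \<inter> underS \<alpha>) \<union> {\<alpha>}| <o mu"
    using card_of_Un_ordLess_infinite_Field finite_card_of_ordLess_infinite mu
    by (metis finite.emptyI finite_insert)
  moreover have "E \<inter> under \<alpha> \<subseteq> (E \<inter> underS \<alpha>) \<union> {\<alpha>}"
    unfolding under_def underS_def by blast
  ultimately show "|E \<inter> under \<alpha>| <o mu"
    using card_of_mono1 ordLeq_ordLess_trans by blast
qed

lemma (in wo_rel) small_subset_bounded_below:
  assumes "stable mu" and heavy: "\<not> |E \<inter> underS \<delta>| <o mu"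
    and light: "\<And>\<alpha>. \<alpha> \<in> underS \<delta> \<Longrightarrow> |E \<inter> under \<alpha>| <o mu"
    and Z: "Z \<subseteq> underS \<delta>" "|Z| <o mu"
  obtains e where "e \<in> E" "e \<in> underS \<delta>" "Z \<subseteq> underS e"
proof -
  have "|\<Union>z\<in>Z. E \<inter> under z| <o mu"
    by (rule stable_UNION[OF \<open>stable mu\<close> Z(2)]) (use light Z(1) in auto)
  then have "\<not> E \<inter> underS \<delta> \<subseteq> (\<Union>z\<in>Z. E \<inter> under z)"
    using heavy card_of_mono1 ordLeq_ordLess_trans by blast
  then obtain e where e: "e \<in> E" "e \<in> underS \<delta>" "e \<notin> (\<Union>z\<in>Z. E \<inter> under z)"
    by blast
  have "z \<in> underS e" if "z \<in> Z" for z
  proof -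
    have "(e, z) \<notin> r"
      using e(1,3) that unfolding under_def by blast
    moreover have "z \<in> Field r" "e \<in> Field r"
      using that Z(1) e(2) underS_Field by fast+
    ultimately show ?thesis
      using underS_or_le[of z e] by blast
  qed
  with e(1,2) show thesis
    by (intro that) auto
qed

lemma (in wo_rel) cofinal_fibre:
  assumes bounded: "\<And>Z. Z \<subseteq> U \<Longrightarrow> |Z| <o mu \<Longrightarrow> \<exists>e\<in>U. Z \<subseteq> underS e"
    and "d ` U \<subseteq> C" "|C| <o mu"
  shows "\<exists>c\<in>C. \<forall>\<beta>\<in>U. \<exists>\<alpha>\<in>U. d \<alpha> = c \<and> (\<beta>, \<alpha>) \<in> r"
proof (rule ccontr)
  assume "\<not> ?thesis"
  then have "\<forall>c\<in>C. \<exists>\<beta>. \<beta> \<in> U \<and> (\<forall>\<alpha>\<in>U. d \<alpha> = c \<longrightarrow> (\<beta>, \<alpha>) \<notin> r)"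
    by blast
  then have "\<exists>b. \<forall>c\<in>C. b c \<in> U \<and> (\<forall>\<alpha>\<in>U. d \<alpha> = c \<longrightarrow> (b c, \<alpha>) \<notin> r)"
    by (rule bchoice)
  then obtain b where b: "\<forall>c\<in>C. b c \<in> U \<and> (\<forall>\<alpha>\<in>U. d \<alpha> = c \<longrightarrow> (b c, \<alpha>) \<notin> r)"
    by blast
  have "|b ` C| \<le>o |C|"
    by (rule card_of_image)
  then have "|b ` C| <o mu"
    using \<open>|C| <o mu\<close> by (rule ordLeq_ordLess_trans)
  moreover have "b ` C \<subseteq> U"
    using b by blast
  ultimately obtain e where e: "e \<in> U" "b ` C \<subseteq> underS e"
    using bounded by blast
  then have "d e \<in> C"
    using \<open>d ` U \<subseteq> C\<close> by blast
  then have "b (d e) \<in> underS e" "(b (d e), e) \<notin> r"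
    using b e by auto
  then show False
    unfolding underS_def by blast
qed

text \<open>For infinite \<open>k\<close> these are exactly the well-orders of type \<open>k\<^sup>+\<close>.\<close>
definition long_wellorder :: "'k rel \<Rightarrow> 'i rel \<Rightarrow> bool" where
  "long_wellorder k W \<longleftrightarrow> Well_order W \<and>
     (\<forall>Z \<subseteq> Field W. |Z| \<le>o k \<longrightarrow> (\<exists>\<beta>\<in>Field W. Z \<subseteq> underS W \<beta>)) \<and>
     (\<forall>\<beta>\<in>Field W. |underS W \<beta>| \<le>o k)"

lemma long_wellorder_Well_order: "long_wellorder k W \<Longrightarrow> Well_order W"
  unfolding long_wellorder_def by blast

lemma long_wellorder_bounded:
  "long_wellorder k W \<Longrightarrow> Z \<subseteq> Field W \<Longrightarrow> |Z| \<le>o k \<Longrightarrow> \<exists>\<beta>\<in>Field W. Z \<subseteq> underS W \<beta>"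
  unfolding long_wellorder_def by blast

lemma long_wellorder_underS: "long_wellorder k W \<Longrightarrow> \<beta> \<in> Field W \<Longrightarrow> |underS W \<beta>| \<le>o k"
  unfolding long_wellorder_def by blast

lemma long_wellorder_Field_large: "long_wellorder k W \<Longrightarrow> \<not> |Field W| \<le>o k"
  using long_wellorder_bounded[of k W "Field W"] underS_notIn by (metis subsetD subset_refl)

lemma long_wellorder_small_if_not_cofinal:
  assumes k: "Card_order k" "infinite (Field k)" and long: "long_wellorder k W"
    and D: "D \<subseteq> Field W" "\<not> cofinal D W"
  shows "|D| \<le>o k"
proof -
  interpret wo_rel W
    using long_wellorder_Well_order[OF long] unfolding wo_rel_def .
  obtain \<beta> where \<beta>: "\<beta> \<in> Field W" "\<forall>\<alpha>\<in>D. \<not> (\<beta> \<noteq> \<alpha> \<and> (\<beta>, \<alpha>) \<in> W)"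
    using D(2) unfolding cofinal_def by blast
  have "\<alpha> \<in> underS \<beta> \<union> {\<beta>}" if "\<alpha> \<in> D" for \<alpha>
  proof -
    have "\<alpha> \<in> Field W"
      using that D(1) by blast
    then show ?thesis
      using underS_or_le[OF _ \<beta>(1), of \<alpha>] \<beta>(2) that by auto
  qed
  then have "|D| \<le>o |underS \<beta> \<union> {\<beta>}|"
    by (intro card_of_mono1) blast
  also have "|underS \<beta> \<union> {\<beta>}| \<le>o k"
    using long_wellorder_underS[OF long \<beta>(1)] singleton_ordLeq_infinite[OF k]
    by (rule card_of_Un_ordLeq_infinite_Field[OF k(2) _ _ k(1)])
  finally show ?thesis .
qed

lemma long_wellorder_heavy_point:
  assumes k: "Card_order k" and long: "long_wellorder k W"
    and mu: "Card_order mu" "mu \<le>o k" and E: "E \<subseteq> Field W" "\<not> |E| \<le>o k"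
  obtains \<beta> where "\<beta> \<in> Field W" "\<not> |E \<inter> underS W \<beta>| <o mu"
proof -
  have "k <o |E|"
    using E(2) not_ordLeq_iff_ordLess[OF card_order_on_well_order_on[OF k] card_of_Well_order]
    by blast
  have "|Field mu| =o mu"
    by (rule card_of_Field_ordIso[OF mu(1)])
  also note mu(2)
  also note \<open>k <o |E|\<close>
  finally have "|Field mu| \<le>o |E|"
    by (rule ordLess_imp_ordLeq)
  then obtain Z where Z: "Z \<subseteq> E" "|Field mu| =o |Z|"
    using internalize_card_of_ordLeq2 by metis
  have Z_mu: "|Z| =o mu"
    using ordIso_symmetric[OF Z(2)] card_of_Field_ordIso[OF mu(1)] by (rule ordIso_transitive)
  then have "|Z| \<le>o k"
    using mu(2) by (rule ordIso_ordLeq_trans)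
  moreover have "Z \<subseteq> Field W"
    using Z(1) E(1) by blast
  ultimately obtain \<beta> where \<beta>: "\<beta> \<in> Field W" "Z \<subseteq> underS W \<beta>"
    using long_wellorder_bounded[OF long, of Z] by blast
  have "\<not> |E \<inter> underS W \<beta>| <o mu"
  proof
    assume small: "|E \<inter> underS W \<beta>| <o mu"
    have "|Z| \<le>o |E \<inter> underS W \<beta>|"
      using Z(1) \<beta>(2) by (intro card_of_mono1) blast
    then have "|Z| <o mu"
      using small by (rule ordLeq_ordLess_trans)
    then show False
      using Z_mu not_ordLess_ordIso by blast
  qed
  with \<beta>(1) show thesis
    by (rule that)
qed

lemma long_wellorder_cardSuc:
  assumes k: "Card_order k" "infinite (Field k)"
  shows "long_wellorder k (cardSuc k)"
proof -
  let ?W = "cardSuc k"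
  interpret wo_rel ?W
    using cardSuc_Well_order[OF k(1)] unfolding wo_rel_def .
  have card_W: "Card_order ?W" and infinite_W: "infinite (Field ?W)"
    using cardSuc_Card_order[OF k(1)] cardSuc_finite[OF k(1)] k(2) by auto
  have small_iff: "|Z| <o ?W \<longleftrightarrow> |Z| \<le>o k" for Z :: "'a set set"
    by (rule cardSuc_ordLeq_ordLess[OF k(1) card_of_Card_order])
  have "\<exists>\<beta>\<in>Field ?W. Z \<subseteq> underS \<beta>" if Z: "Z \<subseteq> Field ?W" "|Z| \<le>o k" for Z
  proof -
    have "\<not> cofinal Z ?W"
      using infinite_cardSuc_regularCard[OF k(2) k(1)] Z small_iff not_ordLess_ordIso
      unfolding regularCard_def by blast
    then obtain a where a: "a \<in> Field ?W" "\<forall>z\<in>Z. \<not> (a \<noteq> z \<and> (a, z) \<in> ?W)"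
      unfolding cofinal_def by blast
    obtain \<beta> where \<beta>: "\<beta> \<in> Field ?W" "(\<beta>, a) \<notin> ?W"
      using Card_order_infinite_not_under[OF card_W infinite_W] under_Field[of ?W a]
      unfolding Order_Relation.under_def by blast
    have "a \<in> underS \<beta>"
      using underS_or_le[OF a(1) \<beta>(1)] \<beta>(2) by blast
    moreover have "(z, a) \<in> ?W" if "z \<in> Z" for z
      using underS_or_le[of a z] a that Z(1) REFL unfolding underS_def refl_on_def by blast
    ultimately show ?thesis
      using \<beta>(1) le_underS_trans by blast
  qed
  moreover have "|underS \<beta>| \<le>o k" if "\<beta> \<in> Field ?W" for \<beta>
    using card_of_underS[OF card_W that] small_iff by blast
  ultimately show ?thesis
    unfolding long_wellorder_def using WELL by blast
qed

lemma long_wellorder_Restr_cofinal: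
  assumes long: "long_wellorder k W" and J: "J \<subseteq> Field W" "cofinal J W"
  shows "long_wellorder k (Restr W J)"
proof -
  interpret wo_rel W
    using long_wellorder_Well_order[OF long] unfolding wo_rel_def .
  have field: "Field (Restr W J) = J"
    by (rule Refl_Field_Restr2[OF REFL J(1)])
  have under: "Order_Relation.underS (Restr W J) \<beta> = underS \<beta> \<inter> J" if "\<beta> \<in> J" for \<beta>
    using that unfolding Order_Relation.underS_def by blast
  have bounded: "\<exists>\<beta>\<in>J. Z \<subseteq> Order_Relation.underS (Restr W J) \<beta>" if Z: "Z \<subseteq> J" "|Z| \<le>o k" for Z
  proof -
    obtain \<beta> where \<beta>: "\<beta> \<in> Field W" "Z \<subseteq> underS \<beta>"
      using long_wellorder_bounded[OF long] Z J(1) by (meson order_trans)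
    then obtain \<gamma> where "\<gamma> \<in> J" "(\<beta>, \<gamma>) \<in> W"
      using J(2) unfolding cofinal_def by blast
    then show ?thesis
      using \<beta>(2) Z(1) underS_le_trans under by blast
  qed
  have small: "|Order_Relation.underS (Restr W J) \<beta>| \<le>o k" if "\<beta> \<in> J" for \<beta>
  proof -
    have "|underS \<beta> \<inter> J| \<le>o |underS \<beta>|"
      by (rule card_of_mono1) blast
    also have "|underS \<beta>| \<le>o k"
      using long_wellorder_underS[OF long] that J(1) by blast
    finally show ?thesis
      using under[OF that] by simp
  qed
  have "Well_order (Restr W J)"
    by (rule Well_order_Restr[OF WELL])
  with bounded small show ?thesis
    unfolding long_wellorder_def field by blast
qed

text \<open>Pigeonhole: \<open>Field W\<close> is the union of the \<open>|Field k|\<close> many sets \<open>D a\<close>, so some \<open>D a\<close> has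
  size \<open>> k\<close> and is therefore cofinal.\<close>
lemma cofinal_subset_of_bounded_size:
  assumes k: "Card_order k" "infinite (Field k)" and long: "long_wellorder k W"
    and h: "\<And>\<alpha>. \<alpha> \<in> Field W \<Longrightarrow> |h \<alpha>| <o k"
  obtains a where "a \<in> Field k" "cofinal {\<alpha> \<in> Field W. |h \<alpha>| \<le>o |underS k a|} W"
proof -
  define D where "D a = {\<alpha> \<in> Field W. |h \<alpha>| \<le>o |underS k a|}" for a
  have "\<exists>a\<in>Field k. cofinal (D a) W"
  proof (rule ccontr)
    assume none: "\<not> ?thesis"
    have "|D a| \<le>o k" if "a \<in> Field k" for a
    proof (rule long_wellorder_small_if_not_cofinal[OF k long])
      show "D a \<subseteq> Field W"
        unfolding D_def by blast
      show "\<not> cofinal (D a) W"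
        using none that by blast
    qed
    moreover have "Field W = (\<Union>a\<in>Field k. D a)"
    proof
      show "Field W \<subseteq> (\<Union>a\<in>Field k. D a)"
      proof
        fix \<alpha> assume "\<alpha> \<in> Field W"
        moreover obtain a where "a \<in> Field k" "|h \<alpha>| \<le>o |underS k a|"
          by (rule card_of_ordLess_underS[OF k(1) h[OF \<open>\<alpha> \<in> Field W\<close>]])
        ultimately show "\<alpha> \<in> (\<Union>a\<in>Field k. D a)"
          unfolding D_def by blast
      qed
    qed (auto simp: D_def)
    moreover have "|Field k| \<le>o k"
      using card_of_Field_ordIso[OF k(1)] ordIso_iff_ordLeq by blast
    ultimately have "|Field W| \<le>o k"
      using card_of_UNION_ordLeq_infinite_Field[OF k(2) k(1), of "Field k" D] by simp
    then show False
      using long_wellorder_Field_large[OF long] by blast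
  qed
  then obtain a where "a \<in> Field k" "cofinal (D a) W"
    by blast
  then show thesis
    unfolding D_def by (rule that)
qed

text \<open>\<open>f\<close> is a candidate Freese-Nation map; its interpolation property is assumed only where
  it is used.\<close>
locale long_chain =
  fixes k :: "'k rel" and W :: "'i rel" and A :: "'a set" and r :: "'a rel"
    and f :: "'a \<Rightarrow> 'a set" and g :: "'i \<Rightarrow> 'a"
  assumes card_order_k: "Card_order k" and infinite_k: "infinite (Field k)"
    and long: "long_wellorder k W"
    and partial_order: "partial_order_on A r"
    and chain_in: "g ` Field W \<subseteq> A"
    and chain_iso: "\<And>\<alpha> \<beta>. \<alpha> \<in> Field W \<Longrightarrow> \<beta> \<in> Field W \<Longrightarrow> (\<alpha>, \<beta>) \<in> W \<longleftrightarrow> (g \<alpha>, g \<beta>) \<in> r"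
    and small_f: "\<And>a. a \<in> A \<Longrightarrow> f a \<subseteq> A \<and> |f a| \<le>o k"

sublocale long_chain \<subseteq> wo_rel W
  using long_wellorder_Well_order[OF long] unfolding wo_rel_def .

context long_chain
begin

lemmas bounded = long_wellorder_bounded[OF long]
  and small_underS = long_wellorder_underS[OF long]

lemma exists_above:
  assumes "\<beta> \<in> Field W"
  obtains \<gamma> where "\<gamma> \<in> Field W" "\<beta> \<in> underS \<gamma>"
proof -
  have "{\<beta>} \<subseteq> Field W"
    using assms by blast
  from bounded[OF this singleton_ordLeq_infinite[OF card_order_k infinite_k]]
  obtain \<gamma> where "\<gamma> \<in> Field W" "{\<beta>} \<subseteq> underS \<gamma>"
    by (rule bexE)
  then show thesis
    using that by blast
qed

lemma inj_on_chain: "inj_on g (Field W)"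
proof (rule inj_onI)
  fix \<alpha> \<beta> assume "\<alpha> \<in> Field W" "\<beta> \<in> Field W" "g \<alpha> = g \<beta>"
  then have "(\<alpha>, \<beta>) \<in> W" "(\<beta>, \<alpha>) \<in> W"
    using chain_iso chain_in partial_order unfolding partial_order_on_def preorder_on_def refl_on_def
    by auto
  then show "\<alpha> = \<beta>"
    using ANTISYM unfolding antisym_def by blast
qed

definition interpolating :: bool where
  "interpolating \<longleftrightarrow> (\<forall>a\<in>A. \<forall>b\<in>A. (a, b) \<in> r \<longrightarrow> (\<exists>c\<in>f a \<inter> f b. (a, c) \<in> r \<and> (c, b) \<in> r))"

text \<open>A submodel imitates an elementary submodel containing \<open>f\<close> and \<open>g\<close>: whenever some chain
  element is not below \<open>s \<in> S\<close>, such a chain element already lies in \<open>S\<close>.\<close>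
definition submodel :: "'a set \<Rightarrow> bool" where
  "submodel S \<longleftrightarrow> (\<forall>s\<in>S. f s \<subseteq> S) \<and>
     (\<forall>s\<in>S. (\<exists>\<alpha>\<in>Field W. (g \<alpha>, s) \<notin> r) \<longrightarrow> (\<exists>\<alpha>\<in>Field W. g \<alpha> \<in> S \<and> (g \<alpha>, s) \<notin> r))"

text \<open>The chain meets some submodel exactly in its part below \<open>\<delta>\<close> (for an elementary submodel
  \<open>M\<close> this is \<open>\<delta> = M \<inter> k\<^sup>+\<close>).\<close>
definition submodel_cut :: "'i \<Rightarrow> bool" where
  "submodel_cut \<delta> \<longleftrightarrow> \<delta> \<in> Field W \<and> (\<exists>S. submodel S \<and> Field W \<inter> g -` S = underS \<delta>)"

lemma submodel_UN: "(\<And>i. i \<in> I \<Longrightarrow> submodel (S i)) \<Longrightarrow> submodel (\<Union>i\<in>I. S i)"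
  unfolding submodel_def by (simp add: Bex_def) blast

definition witness :: "'a \<Rightarrow> 'i" where
  "witness s = (SOME \<alpha>. \<alpha> \<in> Field W \<and> (g \<alpha>, s) \<notin> r)"

lemma witness_spec: "\<exists>\<alpha>\<in>Field W. (g \<alpha>, s) \<notin> r \<Longrightarrow> witness s \<in> Field W \<and> (g (witness s), s) \<notin> r"
  unfolding witness_def by (rule someI_ex) blast

definition hull_step :: "'a set \<Rightarrow> 'a set" where
  "hull_step Y = Y \<union> (\<Union>y\<in>Y. f y) \<union> g ` witness ` {y\<in>Y. \<exists>\<alpha>\<in>Field W. (g \<alpha>, y) \<notin> r}"

lemma hull_step_small:
  assumes "Y \<subseteq> A" "|Y| \<le>o k"
  shows "hull_step Y \<subseteq> A" "|hull_step Y| \<le>o k"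
proof -
  define N where "N = {y\<in>Y. \<exists>\<alpha>\<in>Field W. (g \<alpha>, y) \<notin> r}"
  have "g (witness y) \<in> A" if "y \<in> N" for y
    using witness_spec that chain_in unfolding N_def by blast
  then show "hull_step Y \<subseteq> A"
    unfolding hull_step_def N_def[symmetric] using assms(1) small_f by blast
  have "|\<Union>y\<in>Y. f y| \<le>o k"
    by (rule card_of_UNION_ordLeq_infinite_Field[OF infinite_k card_order_k assms(2)])
      (use small_f assms(1) in blast)
  then have Y_f: "|Y \<union> (\<Union>y\<in>Y. f y)| \<le>o k"
    by (rule card_of_Un_ordLeq_infinite_Field[OF infinite_k assms(2) _ card_order_k])
  have "|g ` witness ` N| \<le>o |N|"
    by (rule ordLeq_transitive[OF card_of_image card_of_image])
  also have "|N| \<le>o k"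
    by (rule ordLeq_transitive[OF card_of_mono1 assms(2)]) (auto simp: N_def)
  finally show "|hull_step Y| \<le>o k"
    unfolding hull_step_def N_def[symmetric]
    by (rule card_of_Un_ordLeq_infinite_Field[OF infinite_k Y_f _ card_order_k])
qed

lemma submodel_hull:
  assumes "X \<subseteq> A" "|X| \<le>o k"
  obtains S where "X \<subseteq> S" "S \<subseteq> A" "|S| \<le>o k" "submodel S"
proof
  define Y where "Y n = (hull_step ^^ n) X" for n
  have Y: "Y n \<subseteq> A \<and> |Y n| \<le>o k" for n
    by (induction n) (simp_all add: Y_def assms hull_step_small)
  have Y_Suc: "Y (Suc n) = hull_step (Y n)" for n
    unfolding Y_def by simp
  show "X \<subseteq> (\<Union>n. Y n)"
    using Y_def by (metis UNIV_I UN_upper funpow_0)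
  show "(\<Union>n. Y n) \<subseteq> A"
    using Y by blast
  show "|\<Union>n. Y n| \<le>o k"
    using card_of_UNION_ordLeq_infinite_Field[OF infinite_k card_order_k
        card_of_nat_ordLeq_infinite[OF card_order_k infinite_k]] Y by blast
  show "submodel (\<Union>n. Y n)"
    unfolding submodel_def
  proof (intro conjI ballI impI)
    fix s assume "s \<in> (\<Union>n. Y n)"
    then obtain n where n: "s \<in> Y n"
      by blast
    then show "f s \<subseteq> (\<Union>n. Y n)"
      using Y_Suc[of n] unfolding hull_step_def by blast
    assume "\<exists>\<alpha>\<in>Field W. (g \<alpha>, s) \<notin> r"
    then have "witness s \<in> Field W" "(g (witness s), s) \<notin> r" "g (witness s) \<in> Y (Suc n)"
      using witness_spec[of s] n Y_Suc[of n] unfolding hull_step_def by auto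
    then show "\<exists>\<alpha>\<in>Field W. g \<alpha> \<in> (\<Union>n. Y n) \<and> (g \<alpha>, s) \<notin> r"
      by blast
  qed
qed

lemma submodel_step_above:
  assumes "y \<in> Field W"
  shows "\<exists>S y'. submodel S \<and> g ` underS y \<subseteq> S \<and> y' \<in> Field W \<and> y \<in> underS y' \<and>
    Field W \<inter> g -` S \<subseteq> underS y'"
proof -
  have "|g ` underS y| \<le>o |underS y|"
    by (rule card_of_image)
  also have "|underS y| \<le>o k"
    using assms by (rule small_underS)
  finally have "|g ` underS y| \<le>o k" .
  moreover have "g ` underS y \<subseteq> A"
    using chain_in underS_Field[of _ W y] by blast
  ultimately obtain S where S: "g ` underS y \<subseteq> S" "S \<subseteq> A" "|S| \<le>o k" "submodel S"
    using submodel_hull by metis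
  define Z where "Z = (Field W \<inter> g -` S) \<union> {y}"
  have "|Field W \<inter> g -` S| \<le>o |S|"
    unfolding card_of_ordLeq[symmetric]
    by (intro exI[of _ g]) (auto intro: inj_on_subset[OF inj_on_chain])
  then have "|Field W \<inter> g -` S| \<le>o k"
    using S(3) by (rule ordLeq_transitive)
  then have "|Z| \<le>o k"
    unfolding Z_def
    by (rule card_of_Un_ordLeq_infinite_Field[OF infinite_k _
          singleton_ordLeq_infinite[OF card_order_k infinite_k] card_order_k])
  moreover have "Z \<subseteq> Field W"
    using assms unfolding Z_def by blast
  ultimately obtain y' where y': "y' \<in> Field W" "Z \<subseteq> underS y'"
    using bounded[of Z] by blast
  then have "y \<in> underS y'" "Field W \<inter> g -` S \<subseteq> underS y'"
    unfolding Z_def by blast+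
  with S(1,4) y'(1) show ?thesis
    by blast
qed

lemma trace_UN_eq_underS_sup:
  assumes S: "\<And>n. g ` underS (ys n) \<subseteq> S n" "\<And>n. Field W \<inter> g -` S n \<subseteq> underS (ys (Suc n))"
    and ys: "\<And>n. ys n \<in> Field W" "\<And>n. ys n \<in> underS (ys (Suc n))"
    and sup: "range ys \<subseteq> underS \<delta>" "\<And>\<beta>. \<beta> \<in> Field W \<Longrightarrow> range ys \<subseteq> underS \<beta> \<Longrightarrow> (\<delta>, \<beta>) \<in> W"
  shows "Field W \<inter> g -` (\<Union>n. S n) = underS \<delta>"
proof
  show "Field W \<inter> g -` (\<Union>n. S n) \<subseteq> underS \<delta>"
  proof
    fix \<alpha> assume "\<alpha> \<in> Field W \<inter> g -` (\<Union>n. S n)"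
    then obtain n where "\<alpha> \<in> Field W \<inter> g -` S n"
      by blast
    then have "\<alpha> \<in> underS (ys (Suc n))"
      using S(2) by blast
    moreover have "ys (Suc n) \<in> underS \<delta>"
      using sup(1) by blast
    ultimately show "\<alpha> \<in> underS \<delta>"
      by (rule underS_trans)
  qed
  show "underS \<delta> \<subseteq> Field W \<inter> g -` (\<Union>n. S n)"
  proof
    fix \<alpha> assume \<alpha>: "\<alpha> \<in> underS \<delta>"
    then have \<alpha>W: "\<alpha> \<in> Field W"
      using underS_Field by fast
    have "\<not> range ys \<subseteq> underS \<alpha>"
      using sup(2)[OF \<alpha>W] underS_not_le[OF \<alpha>] by blast
    then obtain n where "ys n \<notin> underS \<alpha>"
      by blast
    then have "(\<alpha>, ys n) \<in> W"
      using underS_or_le[OF ys(1) \<alpha>W] by blast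
    then have "\<alpha> \<in> underS (ys (Suc n))"
      using ys(2) by (rule le_underS_trans)
    then have "g \<alpha> \<in> S (Suc n)"
      using S(1) by blast
    then show "\<alpha> \<in> Field W \<inter> g -` (\<Union>n. S n)"
      using \<alpha>W by blast
  qed
qed

lemma submodel_cut_unbounded:
  assumes "\<gamma> \<in> Field W"
  obtains \<delta> where "submodel_cut \<delta>" "\<gamma> \<in> underS \<delta>"
proof -
  obtain Sf nx where step: "\<And>y. y \<in> Field W \<Longrightarrow> submodel (Sf y) \<and> g ` underS y \<subseteq> Sf y \<and>
      nx y \<in> Field W \<and> y \<in> underS (nx y) \<and> Field W \<inter> g -` Sf y \<subseteq> underS (nx y)"
    using submodel_step_above by metis
  define ys where "ys n = (nx ^^ n) \<gamma>" for n
  have ys: "ys n \<in> Field W" for n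
    by (induction n) (simp_all add: ys_def assms step)
  have ys_Suc: "ys (Suc n) = nx (ys n)" for n
    by (simp add: ys_def)
  define B where "B = {\<beta>\<in>Field W. range ys \<subseteq> underS \<beta>}"
  have "|range ys| \<le>o |UNIV :: nat set|"
    by (rule card_of_image)
  also have "|UNIV :: nat set| \<le>o k"
    by (rule card_of_nat_ordLeq_infinite[OF card_order_k infinite_k])
  finally have "|range ys| \<le>o k" .
  then have B: "B \<subseteq> Field W" "B \<noteq> {}"
    using bounded[of "range ys"] ys unfolding B_def by blast+
  define \<delta> where "\<delta> = minim B"
  have \<delta>: "\<delta> \<in> B"
    unfolding \<delta>_def by (rule minim_in[OF B])
  have "Field W \<inter> g -` (\<Union>n. Sf (ys n)) = underS \<delta>"
  proof (rule trace_UN_eq_underS_sup)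
    show "g ` underS (ys n) \<subseteq> Sf (ys n)" "ys n \<in> Field W" for n
      using step[OF ys[of n]] ys[of n] by blast+
    show "Field W \<inter> g -` Sf (ys n) \<subseteq> underS (ys (Suc n))" "ys n \<in> underS (ys (Suc n))" for n
      using step[OF ys[of n]] by (simp_all add: ys_Suc)
    show "range ys \<subseteq> underS \<delta>"
      using \<delta> unfolding B_def by blast
    show "(\<delta>, \<beta>) \<in> W" if "\<beta> \<in> Field W" "range ys \<subseteq> underS \<beta>" for \<beta>
      using minim_least[OF B(1)] that unfolding \<delta>_def B_def by blast
  qed
  moreover have "submodel (\<Union>n. Sf (ys n))"
    by (rule submodel_UN) (use step ys in blast)
  ultimately have "submodel_cut \<delta>"
    unfolding submodel_cut_def using \<delta> B(1) by blast
  moreover have "ys 0 \<in> underS \<delta>"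
    using \<delta> unfolding B_def by blast
  then have "\<gamma> \<in> underS \<delta>"
    by (simp add: ys_def)
  ultimately show thesis
    by (rule that)
qed

lemma submodel_cut_limit:
  assumes "\<delta> \<in> Field W"
    and cofinal: "\<And>\<alpha>. \<alpha> \<in> underS \<delta> \<Longrightarrow> \<exists>e. submodel_cut e \<and> \<alpha> \<in> underS e \<and> e \<in> underS \<delta>"
  shows "submodel_cut \<delta>"
proof -
  define C where "C = {e. submodel_cut e \<and> e \<in> underS \<delta>}"
  have "\<forall>e\<in>C. \<exists>S. submodel S \<and> Field W \<inter> g -` S = underS e"
    unfolding C_def submodel_cut_def by blast
  then obtain Sf where Sf: "\<And>e. e \<in> C \<Longrightarrow> submodel (Sf e) \<and> Field W \<inter> g -` Sf e = underS e"
    by metis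
  have "Field W \<inter> g -` (\<Union>e\<in>C. Sf e) = (\<Union>e\<in>C. Field W \<inter> g -` Sf e)"
    by blast
  also have "\<dots> = (\<Union>e\<in>C. underS e)"
    using Sf by simp
  also have "\<dots> = underS \<delta>"
  proof
    show "(\<Union>e\<in>C. underS e) \<subseteq> underS \<delta>"
      using underS_trans unfolding C_def by blast
    show "underS \<delta> \<subseteq> (\<Union>e\<in>C. underS e)"
      using cofinal unfolding C_def by blast
  qed
  finally have "Field W \<inter> g -` (\<Union>e\<in>C. Sf e) = underS \<delta>" .
  moreover have "submodel (\<Union>e\<in>C. Sf e)"
    by (rule submodel_UN) (use Sf in blast)
  ultimately show ?thesis
    unfolding submodel_cut_def using assms(1) by blast
qed

lemma submodel_cuts_large: "\<not> |Collect submodel_cut| \<le>o k"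
proof
  assume "|Collect submodel_cut| \<le>o k"
  moreover have "Collect submodel_cut \<subseteq> Field W"
    unfolding submodel_cut_def by blast
  ultimately obtain \<beta> where \<beta>: "\<beta> \<in> Field W" "Collect submodel_cut \<subseteq> underS \<beta>"
    using bounded by blast
  obtain \<delta> where \<delta>: "submodel_cut \<delta>" "\<beta> \<in> underS \<delta>"
    by (rule submodel_cut_unbounded[OF \<beta>(1)])
  have "\<delta> \<in> underS \<beta>"
    using \<beta>(2) \<delta>(1) by blast
  then have "\<delta> \<in> underS \<delta>"
    using \<delta>(2) by (rule underS_trans)
  then show False
    by (simp add: underS_notIn)
qed

lemma submodel_cut_at_least_heavy_point:
  assumes "\<delta> \<in> Field W" and heavy: "\<not> |Collect submodel_cut \<inter> underS \<delta>| <o mu"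
    and light: "\<And>\<alpha>. \<alpha> \<in> underS \<delta> \<Longrightarrow> |Collect submodel_cut \<inter> under \<alpha>| <o mu"
  shows "submodel_cut \<delta>"
proof (rule submodel_cut_limit[OF assms(1)])
  fix \<alpha> assume \<alpha>: "\<alpha> \<in> underS \<delta>"
  show "\<exists>e. submodel_cut e \<and> \<alpha> \<in> underS e \<and> e \<in> underS \<delta>"
  proof (rule ccontr)
    assume none: "\<not> ?thesis"
    have "Collect submodel_cut \<inter> underS \<delta> \<subseteq> Collect submodel_cut \<inter> under \<alpha>"
    proof
      fix e assume e: "e \<in> Collect submodel_cut \<inter> underS \<delta>"
      then have "\<alpha> \<notin> underS e"
        using none by blast
      moreover have "e \<in> Field W" "\<alpha> \<in> Field W"
        using e \<alpha> underS_Field by fast+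
      ultimately show "e \<in> Collect submodel_cut \<inter> under \<alpha>"
        using underS_or_le[of \<alpha> e] e unfolding under_def by blast
    qed
    then have "|Collect submodel_cut \<inter> underS \<delta>| \<le>o |Collect submodel_cut \<inter> under \<alpha>|"
      by (rule card_of_mono1)
    then have "|Collect submodel_cut \<inter> underS \<delta>| <o mu"
      using light[OF \<alpha>] by (rule ordLeq_ordLess_trans)
    then show False
      using heavy by blast
  qed
qed

text \<open>A submodel cut \<open>\<delta>\<close> below which the submodel cuts have order type \<open>mu\<close>.\<close>
lemma submodel_cut_of_cofinality:
  assumes mu: "Card_order mu" "infinite (Field mu)" "mu \<le>o k"
  obtains \<delta> where "submodel_cut \<delta>" "\<not> |Collect submodel_cut \<inter> underS \<delta>| <o mu"
    "\<And>\<alpha>. \<alpha> \<in> underS \<delta> \<Longrightarrow> |Collect submodel_cut \<inter> under \<alpha>| <o mu"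
proof -
  have "Collect submodel_cut \<subseteq> Field W"
    unfolding submodel_cut_def by blast
  then obtain \<beta> where \<beta>: "\<beta> \<in> Field W" "\<not> |Collect submodel_cut \<inter> underS \<beta>| <o mu"
    by (rule long_wellorder_heavy_point[OF card_order_k long mu(1,3) _ submodel_cuts_large])
  obtain \<delta> where \<delta>: "\<delta> \<in> Field W" "\<not> |Collect submodel_cut \<inter> underS \<delta>| <o mu"
    and light: "\<And>\<alpha>. \<alpha> \<in> underS \<delta> \<Longrightarrow> |Collect submodel_cut \<inter> under \<alpha>| <o mu"
    by (rule least_heavy_point[OF mu(1,2) \<beta>]) blast
  show thesis
    by (rule that[OF submodel_cut_at_least_heavy_point[OF \<delta> light] \<delta>(2) light])
qed

lemma interpolants_below:
  assumes interpolating and "\<delta> \<in> Field W"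
  obtains d where "\<And>\<alpha>. \<alpha> \<in> underS \<delta> \<Longrightarrow>
    d \<alpha> \<in> f (g \<alpha>) \<inter> f (g \<delta>) \<and> (g \<alpha>, d \<alpha>) \<in> r \<and> (d \<alpha>, g \<delta>) \<in> r"
proof -
  have "\<forall>\<alpha>\<in>underS \<delta>. \<exists>c. c \<in> f (g \<alpha>) \<inter> f (g \<delta>) \<and> (g \<alpha>, c) \<in> r \<and> (c, g \<delta>) \<in> r"
  proof
    fix \<alpha> assume "\<alpha> \<in> underS \<delta>"
    then have "\<alpha> \<in> Field W" "(\<alpha>, \<delta>) \<in> W"
      using underS_Field unfolding underS_def by fast+
    then show "\<exists>c. c \<in> f (g \<alpha>) \<inter> f (g \<delta>) \<and> (g \<alpha>, c) \<in> r \<and> (c, g \<delta>) \<in> r"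
      using assms chain_iso[OF _ assms(2)] chain_in unfolding interpolating_def by blast
  qed
  then show thesis
    using that by metis
qed

text \<open>The pigeonhole step: \<open>f (g \<delta>)\<close> has fewer than \<open>mu\<close> elements, while below \<open>\<delta>\<close> every
  set of fewer than \<open>mu\<close> ordinals is bounded.\<close>
lemma interpolant_above_segment:
  assumes mu: "Card_order mu" "stable mu" "infinite (Field mu)" and interpolating
    and \<delta>: "\<delta> \<in> Field W" "\<not> |Collect submodel_cut \<inter> underS \<delta>| <o mu"
    and light: "\<And>\<alpha>. \<alpha> \<in> underS \<delta> \<Longrightarrow> |Collect submodel_cut \<inter> under \<alpha>| <o mu"
    and small: "|f (g \<delta>)| <o mu"
  shows "\<exists>\<alpha>\<in>underS \<delta>. \<exists>c\<in>f (g \<alpha>). (c, g \<delta>) \<in> r \<and> (\<forall>\<beta>\<in>underS \<delta>. (g \<beta>, c) \<in> r)"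
proof -
  obtain d where d: "\<And>\<alpha>. \<alpha> \<in> underS \<delta> \<Longrightarrow>
      d \<alpha> \<in> f (g \<alpha>) \<inter> f (g \<delta>) \<and> (g \<alpha>, d \<alpha>) \<in> r \<and> (d \<alpha>, g \<delta>) \<in> r"
    by (rule interpolants_below[OF \<open>interpolating\<close> \<delta>(1)]) blast
  have bounded_below: "\<exists>e\<in>underS \<delta>. Z \<subseteq> underS e" if "Z \<subseteq> underS \<delta>" "|Z| <o mu" for Z
    using small_subset_bounded_below[OF mu(2) \<delta>(2) light that] by blast
  have "d ` underS \<delta> \<subseteq> f (g \<delta>)"
    using d by blast
  from cofinal_fibre[OF bounded_below this small]
  obtain c where cofinal: "\<forall>\<beta>\<in>underS \<delta>. \<exists>\<alpha>\<in>underS \<delta>. d \<alpha> = c \<and> (\<beta>, \<alpha>) \<in> W"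
    by blast
  have "underS \<delta> \<noteq> {}"
    using \<delta>(2) finite_card_of_ordLess_infinite[OF mu(1,3), of "{}"] by force
  then obtain \<alpha> where \<alpha>: "\<alpha> \<in> underS \<delta>" "d \<alpha> = c"
    using cofinal by blast
  have "(g \<beta>, c) \<in> r" if \<beta>: "\<beta> \<in> underS \<delta>" for \<beta>
  proof -
    obtain \<alpha>' where \<alpha>': "\<alpha>' \<in> underS \<delta>" "d \<alpha>' = c" "(\<beta>, \<alpha>') \<in> W"
      using cofinal \<beta> by blast
    have "(g \<beta>, g \<alpha>') \<in> r"
      using chain_iso[OF underS_Field[OF \<beta>] underS_Field[OF \<alpha>'(1)]] \<alpha>'(3) by blast
    moreover have "(g \<alpha>', c) \<in> r"
      using d[OF \<alpha>'(1)] \<alpha>'(2) by blast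
    ultimately show ?thesis
      using partial_order unfolding partial_order_on_def preorder_on_def trans_def by blast
  qed
  moreover have "c \<in> f (g \<alpha>)" "(c, g \<delta>) \<in> r"
    using d[OF \<alpha>(1)] \<alpha>(2) by blast+
  ultimately show ?thesis
    using \<alpha>(1) by blast
qed

lemma submodel_bounds_chain:
  assumes "submodel S" "Field W \<inter> g -` S = underS \<delta>" "c \<in> S"
    and below: "\<And>\<beta>. \<beta> \<in> underS \<delta> \<Longrightarrow> (g \<beta>, c) \<in> r"
    and "\<alpha> \<in> Field W"
  shows "(g \<alpha>, c) \<in> r"
proof (rule ccontr)
  assume "(g \<alpha>, c) \<notin> r"
  then obtain \<alpha>' where "\<alpha>' \<in> Field W" "g \<alpha>' \<in> S" "(g \<alpha>', c) \<notin> r"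
    using assms(1,3,5) unfolding submodel_def by blast
  moreover from this have "\<alpha>' \<in> underS \<delta>"
    using assms(2) by blast
  ultimately show False
    using below by blast
qed

theorem not_interpolating_if_stable_bound:
  assumes mu: "Card_order mu" "stable mu" "infinite (Field mu)" "mu \<le>o k"
    and small: "\<And>\<alpha>. \<alpha> \<in> Field W \<Longrightarrow> |f (g \<alpha>)| <o mu"
  shows "\<not> interpolating"
proof
  assume interpolating
  obtain \<delta> where \<delta>: "submodel_cut \<delta>" "\<not> |Collect submodel_cut \<inter> underS \<delta>| <o mu"
    and light: "\<And>\<alpha>. \<alpha> \<in> underS \<delta> \<Longrightarrow> |Collect submodel_cut \<inter> under \<alpha>| <o mu"
    by (rule submodel_cut_of_cofinality[OF mu(1,3,4)]) blast
  then obtain S where S: "submodel S" "Field W \<inter> g -` S = underS \<delta>" and \<delta>W: "\<delta> \<in> Field W"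
    unfolding submodel_cut_def by blast
  obtain \<alpha> c where \<alpha>: "\<alpha> \<in> underS \<delta>" and c: "c \<in> f (g \<alpha>)" "(c, g \<delta>) \<in> r"
    and below: "\<forall>\<beta>\<in>underS \<delta>. (g \<beta>, c) \<in> r"
    using interpolant_above_segment[OF mu(1-3) \<open>interpolating\<close> \<delta>W \<delta>(2) light small[OF \<delta>W]]
    by blast
  have "c \<in> S"
    using S \<alpha> c(1) unfolding submodel_def by blast
  have "c \<noteq> g \<delta>"
  proof
    assume "c = g \<delta>"
    then have "\<delta> \<in> underS \<delta>"
      using \<open>c \<in> S\<close> S(2) \<delta>W by blast
    then show False
      by (simp add: underS_notIn)
  qed
  moreover obtain \<beta> where \<beta>: "\<beta> \<in> Field W" "\<delta> \<in> underS \<beta>"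
    by (rule exists_above[OF \<delta>W])
  then have "(g \<delta>, g \<beta>) \<in> r" "(g \<beta>, c) \<in> r"
    using chain_iso[OF \<delta>W \<beta>(1)] submodel_bounds_chain[OF S \<open>c \<in> S\<close> bspec[OF below] \<beta>(1)]
    unfolding underS_def by blast+
  ultimately show False
    using c(2) partial_order
    unfolding partial_order_on_def preorder_on_def trans_def antisym_def by blast
qed

lemma long_chain_Restr_cofinal:
  assumes "J \<subseteq> Field W" "cofinal J W"
  shows "long_chain k (Restr W J) A r f g"
proof -
  have field: "Field (Restr W J) = J"
    by (rule Refl_Field_Restr2[OF REFL assms(1)])
  show ?thesis
    using card_order_k infinite_k long_wellorder_Restr_cofinal[OF long assms] partial_order
      chain_in chain_iso small_f assms(1)
    by unfold_locales (auto simp: field subset_iff image_subset_iff)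
qed

theorem not_interpolating:
  assumes small: "\<And>\<alpha>. \<alpha> \<in> Field W \<Longrightarrow> |f (g \<alpha>)| <o k"
  shows "\<not> interpolating"
proof (cases "stable k")
  case True
  have "k \<le>o k"
    by (rule ordLeq_reflexive[OF card_order_on_well_order_on[OF card_order_k]])
  with True show ?thesis
    using not_interpolating_if_stable_bound[OF card_order_k _ infinite_k _ small] by blast
next
  case False
  obtain a where a: "a \<in> Field k"
    and cofinal: "cofinal {\<alpha> \<in> Field W. |f (g \<alpha>)| \<le>o |Order_Relation.underS k a|} W"
    by (rule cofinal_subset_of_bounded_size[OF card_order_k infinite_k long small])
  obtain mu :: "('k + nat) set rel" where mu: "Card_order mu" "stable mu" "infinite (Field mu)"
      "mu \<le>o k" "|Order_Relation.underS k a| <o mu"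
    by (rule stable_cardSuc_below_singular[OF card_order_k infinite_k False a])
  define J where "J = {\<alpha> \<in> Field W. |f (g \<alpha>)| \<le>o |Order_Relation.underS k a|}"
  have J: "J \<subseteq> Field W" "cofinal J W"
    using cofinal unfolding J_def by auto
  have "|f (g \<alpha>)| <o mu" if "\<alpha> \<in> Field (Restr W J)" for \<alpha>
  proof -
    have "\<alpha> \<in> J"
      using that Field_Restr_subset[of W J] by blast
    then have "|f (g \<alpha>)| \<le>o |Order_Relation.underS k a|"
      unfolding J_def by blast
    then show ?thesis
      using mu(5) by (rule ordLeq_ordLess_trans)
  qed
  then show ?thesis
    using long_chain.not_interpolating_if_stable_bound[OF long_chain_Restr_cofinal[OF J] mu(1-4)]
    by blast
qed

end

theorem not_FN_if_order_embeds_cardSuc: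
  fixes k :: "'k rel"
  assumes k: "Card_order k" "infinite (Field k)"
    and po: "partial_order_on A r" and emb: "order_embeds (cardSuc k) A r"
  shows "\<not> FN k A r"
proof
  assume "FN k A r"
  then obtain f where f: "\<forall>a\<in>A. f a \<subseteq> A \<and> |f a| <o k"
    and interpolate: "\<forall>a\<in>A. \<forall>b\<in>A. (a, b) \<in> r \<longrightarrow> (\<exists>c\<in>f a \<inter> f b. (a, c) \<in> r \<and> (c, b) \<in> r)"
    unfolding FN_def by blast
  obtain g where g_in: "g ` Field (cardSuc k) \<subseteq> A"
    and g_iso: "\<forall>x\<in>Field (cardSuc k). \<forall>y\<in>Field (cardSuc k). (x, y) \<in> cardSuc k \<longleftrightarrow> (g x, g y) \<in> r"
    using emb unfolding order_embeds_def by blast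
  have f_le: "\<And>a. a \<in> A \<Longrightarrow> f a \<subseteq> A \<and> |f a| \<le>o k"
    using f ordLess_imp_ordLeq by blast
  have chain: "long_chain k (cardSuc k) A r f g"
    using k long_wellorder_cardSuc[OF k] po g_in g_iso f_le by unfold_locales blast+
  have "|f (g \<alpha>)| <o k" if "\<alpha> \<in> Field (cardSuc k)" for \<alpha>
    using f g_in that by blast
  then show False
    using long_chain.not_interpolating[OF chain] interpolate
    unfolding long_chain.interpolating_def[OF chain] by blast
qed

lemma order_embeds_plus_one: "order_embeds (plus_one s) A r \<Longrightarrow> order_embeds s A r"
proof -
  assume "order_embeds (plus_one s) A r"
  then obtain g where g: "g ` Field (plus_one s) \<subseteq> A" "inj_on g (Field (plus_one s))"
    "\<forall>x\<in>Field (plus_one s). \<forall>y\<in>Field (plus_one s). (x, y) \<in> plus_one s \<longleftrightarrow> (g x, g y) \<in> r"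
    unfolding order_embeds_def by blast
  have Some_in: "Some x \<in> Field (plus_one s)" if "x \<in> Field s" for x
  proof -
    have "(Some x, None) \<in> plus_one s"
      using that unfolding plus_one_def by blast
    then show ?thesis
      unfolding Field_def by blast
  qed
  have Some_iff: "(Some x, Some y) \<in> plus_one s \<longleftrightarrow> (x, y) \<in> s" for x y
    unfolding plus_one_def by blast
  show ?thesis
    unfolding order_embeds_def
  proof (intro exI[of _ "g \<circ> Some"] conjI ballI)
    show "(g \<circ> Some) ` Field s \<subseteq> A"
      using g(1) Some_in by auto
    show "inj_on (g \<circ> Some) (Field s)"
      using g(2) Some_in unfolding inj_on_def by auto
    fix x y assume "x \<in> Field s" "y \<in> Field s"
    then have "(Some x, Some y) \<in> plus_one s \<longleftrightarrow> (g (Some x), g (Some y)) \<in> r"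
      using g(3) Some_in by blast
    then show "(x, y) \<in> s \<longleftrightarrow> ((g \<circ> Some) x, (g \<circ> Some) y) \<in> r"
      using Some_iff by simp
  qed
qed

lemma order_embeds_converse: "order_embeds (converse s) A r \<Longrightarrow> order_embeds s A (converse r)"
  unfolding order_embeds_def by auto

lemma FN_converse: "FN k A r \<Longrightarrow> FN k A (converse r)"
  unfolding FN_def by (metis (no_types, lifting) Int_commute converse_iff)

lemma order_embeds_if_embed:
  assumes s: "Well_order s" and t: "Well_order t" and h: "embed s t h"
  shows "order_embeds s (Field t) t"
  unfolding order_embeds_def
proof (intro exI conjI ballI)
  show "h ` Field s \<subseteq> Field t"
    by (rule embed_Field[OF h])
  show inj: "inj_on h (Field s)"
    by (rule embed_inj_on[OF s h])
  have compat: "(a, b) \<in> s \<Longrightarrow> (h a, h b) \<in> t" for a b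
    using embed_compat[OF h] unfolding compat_def by blast
  fix x y assume xy: "x \<in> Field s" "y \<in> Field s"
  show "(x, y) \<in> s \<longleftrightarrow> (h x, h y) \<in> t"
  proof
    assume hxy: "(h x, h y) \<in> t"
    show "(x, y) \<in> s"
    proof (rule ccontr)
      assume "(x, y) \<notin> s"
      then have "(y, x) \<in> s" "x \<noteq> y"
        using wo_rel.TOTALS[of s] wo_rel.REFL[of s] s xy unfolding wo_rel_def refl_on_def by blast+
      then have "h x = h y"
        using compat hxy wo_rel.ANTISYM[of t] t unfolding wo_rel_def antisym_def by blast
      then show False
        using inj xy \<open>x \<noteq> y\<close> unfolding inj_on_def by blast
    qed
  qed (rule compat)
qed

lemma order_embeds_Restr:
  assumes "order_embeds s B (Restr r B)" "B \<subseteq> A"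
  shows "order_embeds s A r"
proof -
  obtain g where g: "g ` Field s \<subseteq> B" "inj_on g (Field s)"
    "\<forall>x\<in>Field s. \<forall>y\<in>Field s. (x, y) \<in> s \<longleftrightarrow> (g x, g y) \<in> Restr r B"
    using assms(1) unfolding order_embeds_def by blast
  have "(g x, g y) \<in> Restr r B \<longleftrightarrow> (g x, g y) \<in> r" if "x \<in> Field s" "y \<in> Field s" for x y
    using that g(1) by blast
  then show ?thesis
    unfolding order_embeds_def using g assms(2) by (intro exI[of _ g]) auto
qed

lemma partial_order_bool_order: "partial_order_on UNIV (bool_order :: 'b::boolean_algebra rel)"
  unfolding partial_order_on_def preorder_on_def refl_on_def trans_def antisym_def bool_order_def
  by auto

lemma depth_le_if_FN:
  fixes k :: "'k rel"
  assumes k: "Card_order k" "infinite (Field k)"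
    and FN: "FN k (UNIV :: 'b::boolean_algebra set) bool_order"
  shows "depth_le k TYPE('b)"
  unfolding depth_le_def
proof (intro allI impI)
  fix W :: "'b set"
  let ?R = "Restr bool_order W"
  assume wo: "Well_order ?R"
  have field: "Field ?R = W"
    unfolding bool_order_def Field_def by auto
  show "|W| \<le>o k"
  proof (rule ccontr)
    assume "\<not> |W| \<le>o k"
    then have "k <o |W|"
      using not_ordLeq_iff_ordLess[OF card_order_on_well_order_on[OF k(1)] card_of_Well_order] by blast
    then have "cardSuc k \<le>o |W|"
      by (rule cardSuc_least[OF k(1) card_of_Card_order])
    also have "|W| \<le>o ?R"
      using card_of_least wo field by metis
    finally obtain h where "embed (cardSuc k) ?R h"
      unfolding ordLeq_def by blast
    then have "order_embeds (cardSuc k) (Field ?R) ?R"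
      by (rule order_embeds_if_embed[OF cardSuc_Well_order[OF k(1)] wo])
    then have emb: "order_embeds (cardSuc k) W ?R"
      by (simp only: field)
    have "order_embeds (cardSuc k) (UNIV :: 'b set) bool_order"
      by (rule order_embeds_Restr[OF emb subset_UNIV])
    then show False
      using not_FN_if_order_embeds_cardSuc[OF k partial_order_bool_order] FN by blast
  qed
qed

theorem proposition4p1:
  fixes k :: "'k rel"
  assumes "Card_order k" and "infinite (Field k)"
  shows "(\<forall>(A :: 'a set) r. partial_order_on A r \<longrightarrow>
            (order_embeds (plus_one (cardSuc k)) A r \<or>
             order_embeds (converse (plus_one (cardSuc k))) A r) \<longrightarrow>
            \<not> FN k A r)
       \<and> (FN k (UNIV :: ('b::boolean_algebra) set) bool_order \<longrightarrow> depth_le k TYPE('b))"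
proof (intro conjI allI impI)
  fix A :: "'a set" and r
  assume po: "partial_order_on A r"
    and emb: "order_embeds (plus_one (cardSuc k)) A r \<or>
      order_embeds (converse (plus_one (cardSuc k))) A r"
  from emb show "\<not> FN k A r"
  proof
    assume "order_embeds (plus_one (cardSuc k)) A r"
    then show ?thesis
      using not_FN_if_order_embeds_cardSuc[OF assms po] order_embeds_plus_one by blast
  next
    assume "order_embeds (converse (plus_one (cardSuc k))) A r"
    then have "order_embeds (cardSuc k) A (converse r)"
      using order_embeds_converse order_embeds_plus_one by blast
    moreover have "partial_order_on A (converse r)"
      using po by simp
    ultimately show ?thesis
      using not_FN_if_order_embeds_cardSuc[OF assms] FN_converse by blast
  qed
next
  assume "FN k (UNIV :: 'b set) bool_order"
  then show "depth_le k TYPE('b)"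
    by (rule depth_le_if_FN[OF assms])
qed

end
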